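(* Let $\beta>0$, $0\le\alpha\le\beta$, and let $M$ be the set of global maximizers on $[-1,1]^2$ of \[ \Gamma(x):=\tfrac12\Big(\tfrac14\beta x_1^2+\tfrac14\beta x_2^2+\tfrac12\alpha x_1x_2\Big)-\tfrac12 I(x_1)-\tfrac12 I(x_2). \] Then for every $\varepsilon>0$ there is $c>0$ such that $\mu_{N,\alpha,\beta,S}\big(m\notin B_\varepsilon(M)\big)\le e^{-cN}$ for all sufficiently large $N$, where $m=(m_1,m_2)$ and $B_\varepsilon(M)$ is the union of open Euclidean balls of radius $\varepsilon$ around the points of $M$. Moreover: (i) if $\alpha+\beta\le 2$, then $(0,0)$ is the unique solution in $(-1,1)^2$ of the critical point equations $\frac12\beta x_1+\frac12\alpha x_2=\operatorname{artanh}(x_1)$, $\frac12\beta x_2+\frac12\alpha x_1=\operatorname{artanh}(x_2)$ (for $\alpha>0$), and $M=\{(0,0)\}$; in particular the law of $m$ converges weakly to $\delta_{(0,0)}$; (ii) if $\alpha+\beta>2$ and $\alpha>0$, then $M=\{(m^*,m^* ),(-m^*,-m^* )\}$, where $m^*>0$ is the positive solution of $\tanh\big(\frac{\alpha+\beta}{2}z\big)=z$.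
   Context: Block spin Ising model: $N$ is even, $S\subset\{1,\dots,N\}$ with $|S|=N/2$. Write $i\sim j$ if $i,j$ both lie in $S$ or both in $S^c$, $i\not\sim j$ otherwise. Hamiltonian $H_{N,\alpha,\beta,S}(\sigma)=-\frac{\beta}{2N}\sum_{i\sim j}\sigma_i\sigma_j-\frac{\alpha}{2N}\sum_{i\not\sim j}\sigma_i\sigma_j$ on $\{-1,+1\}^N$, Gibbs measure $\mu_{N,\alpha,\beta,S}(\sigma)\propto e^{-H_{N,\alpha,\beta,S}(\sigma)}$. Block magnetizations $m_1=\frac2N\sum_{i\in S}\sigma_i$, $m_2=\frac2N\sum_{i\notin S}\sigma_i$. $I(z):=\frac12(1+z)\log(1+z)+\frac12(1-z)\log(1-z)$ for $|z|\le1$. *)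

theory Defs
  imports "HOL-Analysis.Analysis" "HOL-Library.FuncSet"
begin

definition same_block :: "nat set \<Rightarrow> nat \<Rightarrow> nat \<Rightarrow> bool" where
  "same_block S i j \<longleftrightarrow> (i \<in> S \<longleftrightarrow> j \<in> S)"

definition configs :: "nat \<Rightarrow> (nat \<Rightarrow> real) set" where
  "configs N = PiE {1..N} (\<lambda>_. {-1, 1})"

text \<open>Sums over all ordered pairs (i,j) of sites (diagonal included).\<close>
definition hamiltonian :: "nat \<Rightarrow> real \<Rightarrow> real \<Rightarrow> nat set \<Rightarrow> (nat \<Rightarrow> real) \<Rightarrow> real" where
  "hamiltonian N \<alpha> \<beta> S \<sigma> =
     - (\<beta> / (2 * real N)) * (\<Sum>i\<in>{1..N}. \<Sum>j\<in>{1..N}. if same_block S i j then \<sigma> i * \<sigma> j else 0)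
     - (\<alpha> / (2 * real N)) * (\<Sum>i\<in>{1..N}. \<Sum>j\<in>{1..N}. if same_block S i j then 0 else \<sigma> i * \<sigma> j)"

definition gibbs_weight :: "nat \<Rightarrow> real \<Rightarrow> real \<Rightarrow> nat set \<Rightarrow> (nat \<Rightarrow> real) \<Rightarrow> real" where
  "gibbs_weight N \<alpha> \<beta> S \<sigma> = exp (- hamiltonian N \<alpha> \<beta> S \<sigma>)"

definition partition_fn :: "nat \<Rightarrow> real \<Rightarrow> real \<Rightarrow> nat set \<Rightarrow> real" where
  "partition_fn N \<alpha> \<beta> S = (\<Sum>\<sigma>\<in>configs N. gibbs_weight N \<alpha> \<beta> S \<sigma>)"

definition gibbs_prob :: "nat \<Rightarrow> real \<Rightarrow> real \<Rightarrow> nat set \<Rightarrow> ((nat \<Rightarrow> real) \<Rightarrow> bool) \<Rightarrow> real" where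
  "gibbs_prob N \<alpha> \<beta> S P =
     (\<Sum>\<sigma>\<in>{\<sigma>\<in>configs N. P \<sigma>}. gibbs_weight N \<alpha> \<beta> S \<sigma>) / partition_fn N \<alpha> \<beta> S"

definition gibbs_expect :: "nat \<Rightarrow> real \<Rightarrow> real \<Rightarrow> nat set \<Rightarrow> ((nat \<Rightarrow> real) \<Rightarrow> real) \<Rightarrow> real" where
  "gibbs_expect N \<alpha> \<beta> S g =
     (\<Sum>\<sigma>\<in>configs N. gibbs_weight N \<alpha> \<beta> S \<sigma> * g \<sigma>) / partition_fn N \<alpha> \<beta> S"

definition magn :: "nat \<Rightarrow> nat set \<Rightarrow> (nat \<Rightarrow> real) \<Rightarrow> real \<times> real" where
  "magn N S \<sigma> = (2 / real N * (\<Sum>i\<in>S. \<sigma> i), 2 / real N * (\<Sum>i\<in>{1..N} - S. \<sigma> i))"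

definition Ient :: "real \<Rightarrow> real" where
  "Ient z = 1/2 * (1 + z) * ln (1 + z) + 1/2 * (1 - z) * ln (1 - z)"

definition Gamma_fn :: "real \<Rightarrow> real \<Rightarrow> real \<times> real \<Rightarrow> real" where
  "Gamma_fn \<alpha> \<beta> x = 1/2 * (1/4 * \<beta> * (fst x)^2 + 1/4 * \<beta> * (snd x)^2 + 1/2 * \<alpha> * fst x * snd x)
                      - 1/2 * Ient (fst x) - 1/2 * Ient (snd x)"

definition square :: "(real \<times> real) set" where
  "square = {-1..1} \<times> {-1..1}"

definition maximizers :: "real \<Rightarrow> real \<Rightarrow> (real \<times> real) set" where
  "maximizers \<alpha> \<beta> = {x \<in> square. \<forall>y\<in>square. Gamma_fn \<alpha> \<beta> y \<le> Gamma_fn \<alpha> \<beta> x}"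

definition admissible :: "nat \<Rightarrow> nat set \<Rightarrow> bool" where
  "admissible N S \<longleftrightarrow> even N \<and> S \<subseteq> {1..N} \<and> card S = N div 2"

definition law_m_weak_conv_dirac :: "real \<Rightarrow> real \<Rightarrow> (nat \<Rightarrow> nat set) \<Rightarrow> real \<times> real \<Rightarrow> bool" where
  "law_m_weak_conv_dirac \<alpha> \<beta> Sseq p \<longleftrightarrow>
     (\<forall>f :: real \<times> real \<Rightarrow> real. continuous_on UNIV f \<and> bounded (range f) \<longrightarrow>
        (\<lambda>k. gibbs_expect (2 * k) \<alpha> \<beta> (Sseq k) (\<lambda>\<sigma>. f (magn (2 * k) (Sseq k) \<sigma>))) \<longlonglongrightarrow> f p)"

end

theory Submission
  imports Defs "HOL-Real_Asymp.Real_Asymp"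
begin

text \<open>The Gibbs weight of a configuration is exp (N Q(m)), where Q is the quadratic part of
  Gamma and m the pair of block magnetizations. Tilting each block by a field u turns the
  spins into independent ones with log-moment generating function ln cosh u, and the
  Legendre duality between ln cosh and Ient gives two estimates: the partition function is at
  least 2^N exp (N Gamma(z)) for every z (tilt along the tangent of the convex Q at z), and the
  weight of the configurations with magnetization v is at most 2^N exp (N (Gamma(v) + \<eta>))
  (tilt artanh of v shrunk towards 0). As m takes at most (N + 1)^2 values, the probability of
  being \<epsilon>-far from the maximizers decays at the exponential rate of the gap of Gamma there,
  which is positive by compactness. The maximizers themselves are found by writing
  Gamma(x, y) = (F(x) + F(y)) / 2 - \<alpha> (x - y)^2 / 8 with the Curie-Weiss function
  F(z) = g z^2 / 2 - Ient z, g = (\<alpha> + \<beta>) / 2: F is maximal exactly at the roots of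
  artanh z = g z, i.e. at 0 when g \<le> 1 (since Ient z > z^2 / 2) and at the two nonzero roots
  when g > 1.\<close>

section \<open>Entropy and the Legendre transform of ln cosh\<close>

lemma Ient_0 [simp]: "Ient 0 = 0"
  by (simp add: Ient_def)

lemma Ient_minus [simp]: "Ient (- z) = Ient z"
  by (simp add: Ient_def algebra_simps)

lemma continuous_on_xlnx: "continuous_on {0..} (\<lambda>x::real. x * ln x)"
proof -
  have "continuous (at x within {0..}) (\<lambda>x::real. x * ln x)" if "x \<in> {0..}" for x
  proof (cases "x = 0")
    case True
    have "((\<lambda>x::real. x * ln x) \<longlongrightarrow> 0) (at_right 0)" by real_asymp
    then show ?thesis using True by (simp add: continuous_within at_within_Ici_at_right)
  next
    case False
    then have "isCont (\<lambda>x::real. x * ln x) x" using that by (intro continuous_intros) auto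
    then show ?thesis by (rule continuous_at_imp_continuous_at_within)
  qed
  then show ?thesis by (simp add: continuous_on_eq_continuous_within)
qed

lemma continuous_on_Ient: "continuous_on {-1..1} Ient"
proof -
  have "continuous_on {-1..1} (\<lambda>z::real. (1 + z) * ln (1 + z))"
    "continuous_on {-1..1} (\<lambda>z::real. (1 - z) * ln (1 - z))"
    by (rule continuous_on_compose2[OF continuous_on_xlnx]; auto intro!: continuous_intros)+
  then show ?thesis
    unfolding Ient_def[abs_def] by (simp add: mult.assoc continuous_intros)
qed

lemma Ient_has_real_derivative:
  assumes "\<bar>z\<bar> < 1"
  shows "(Ient has_real_derivative artanh z) (at z)"
proof -
  have pos: "1 + z > 0" "1 - z > 0" using assms by auto
  have "((\<lambda>s. 1/2 * ((1 + s) * ln (1 + s)) + 1/2 * ((1 - s) * ln (1 - s))) has_real_derivative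
      1/2 * (ln (1 + z) + 1) + 1/2 * (- ln (1 - z) - 1)) (at z)"
    using pos by (intro DERIV_add DERIV_cmult) (auto intro!: derivative_eq_intros)
  moreover have "(\<lambda>s. 1/2 * ((1 + s) * ln (1 + s)) + 1/2 * ((1 - s) * ln (1 - s))) = Ient"
    by (simp add: Ient_def fun_eq_iff)
  moreover have "1/2 * (ln (1 + z) + 1) + 1/2 * (- ln (1 - z) - 1) = artanh z"
    using pos by (simp add: artanh_def ln_div algebra_simps)
  ultimately show ?thesis by (simp only:)
qed

lemma artanh_gt_self:
  fixes z :: real assumes "0 < z" "z < 1"
  shows "z < artanh z"
proof -
  have "(\<lambda>t. artanh t - t) 0 < (\<lambda>t. artanh t - t) z"
  proof (rule DERIV_pos_imp_increasing_open[OF assms(1)])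
    fix x :: real assume x: "0 < x" "x < z"
    have "x^2 < 1" using x assms by (simp add: abs_square_less_1)
    then have "1 / (1 - x^2) - 1 > 0" using x by (simp add: field_simps)
    moreover have "((\<lambda>t. artanh t - t) has_real_derivative 1 / (1 - x^2) - 1) (at x)"
      using x assms by (auto intro!: derivative_eq_intros)
    ultimately show "\<exists>y. ((\<lambda>t. artanh t - t) has_real_derivative y) (at x) \<and> y > 0" by blast
  qed (use assms in \<open>intro continuous_intros; auto\<close>)
  then show ?thesis by simp
qed

lemma abs_artanh_gt_abs:
  fixes z :: real assumes "\<bar>z\<bar> < 1" "z \<noteq> 0"
  shows "\<bar>z\<bar> < \<bar>artanh z\<bar>"
  using artanh_gt_self[of "\<bar>z\<bar>"] assms by (cases "z > 0") auto

lemma artanh_lt_div: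
  fixes z :: real assumes "0 < z" "z < 1"
  shows "artanh z < z / (1 - z^2)"
proof -
  have "(\<lambda>t. t / (1 - t^2) - artanh t) 0 < (\<lambda>t. t / (1 - t^2) - artanh t) z"
  proof (rule DERIV_pos_imp_increasing_open[OF assms(1)])
    fix x :: real assume x: "0 < x" "x < z"
    have D: "1 - x^2 > 0" using x assms by (simp add: abs_square_less_1)
    have "((\<lambda>t. t / (1 - t^2) - artanh t) has_real_derivative
        (1 * (1 - x^2) - x * (- (2 * x))) / (1 - x^2)^2 - 1 / (1 - x^2)) (at x)"
      using x assms D by (auto intro!: derivative_eq_intros simp: power2_eq_square)
    moreover have quot: "(1 * d - x * (- (2 * x))) / d^2 - 1 / d = 2 * x^2 / d^2" if "d \<noteq> 0" for d
      using that by (simp add: field_simps power2_eq_square)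
    moreover have "2 * x^2 / (1 - x^2)^2 > 0" using x D by simp
    ultimately show "\<exists>y. ((\<lambda>t. t / (1 - t^2) - artanh t) has_real_derivative y) (at x) \<and> y > 0"
      using quot[of "1 - x^2"] D by auto
  next
    have "1 - t^2 \<noteq> 0" if "t \<in> {0..z}" for t
      using that assms abs_square_less_1[of t] by auto
    then show "continuous_on {0..z} (\<lambda>t. t / (1 - t^2) - artanh t)"
      using assms by (intro continuous_intros) auto
  qed
  then show ?thesis by simp
qed

lemma artanh_div_strict_mono:
  fixes a b :: real
  assumes "0 < a" "a < b" "b < 1"
  shows "artanh a / a < artanh b / b"
proof (rule DERIV_pos_imp_increasing_open[OF assms(2)])
  fix x :: real assume x: "a < x" "x < b"
  then have x01: "0 < x" "x < 1" using assms by auto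
  have "1 / (1 - x^2) * x - artanh x > 0"
    using artanh_lt_div[OF x01] by simp
  then have "(1 / (1 - x^2) * x - artanh x * 1) / (x * x) > 0" using x01 by simp
  moreover have "((\<lambda>t. artanh t / t) has_real_derivative
      (1 / (1 - x^2) * x - artanh x * 1) / (x * x)) (at x)"
    using x01 by (auto intro!: derivative_eq_intros)
  ultimately show "\<exists>y. ((\<lambda>t. artanh t / t) has_real_derivative y) (at x) \<and> y > 0" by blast
next
  have "t \<noteq> 0" if "t \<in> {a..b}" for t using that assms by auto
  then show "continuous_on {a..b} (\<lambda>t. artanh t / t)"
    using assms by (intro continuous_intros) auto
qed

lemma tanh_artanh:
  fixes m :: real assumes "\<bar>m\<bar> < 1"
  shows "tanh (artanh m) = m"
proof -
  have pos: "1 + m > 0" "1 - m > 0" using assms by auto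
  have "exp (- 2 * artanh m) = exp (- ln ((1 + m) / (1 - m)))" by (simp add: artanh_def)
  also have "\<dots> = (1 - m) / (1 + m)" using pos by (simp add: exp_minus)
  finally have e: "exp (- 2 * artanh m) = (1 - m) / (1 + m)" .
  show ?thesis unfolding tanh_real_altdef e using pos by (simp add: field_simps)
qed

lemma Ient_gt_half_square:
  fixes z :: real assumes "\<bar>z\<bar> \<le> 1" "z \<noteq> 0"
  shows "z^2 / 2 < Ient z"
proof -
  have pos: "t^2 / 2 < Ient t" if "0 < t" "t \<le> 1" for t :: real
  proof -
    have "(\<lambda>s. Ient s - s^2/2) 0 < (\<lambda>s. Ient s - s^2/2) t"
    proof (rule DERIV_pos_imp_increasing_open[OF that(1)])
      fix x :: real assume x: "0 < x" "x < t"
      have "((\<lambda>s. Ient s - s^2/2) has_real_derivative artanh x - x) (at x)"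
        using x that by (auto intro!: derivative_eq_intros Ient_has_real_derivative)
      moreover have "artanh x - x > 0" using artanh_gt_self[of x] x that by auto
      ultimately show "\<exists>y. ((\<lambda>s. Ient s - s^2/2) has_real_derivative y) (at x) \<and> y > 0" by blast
    next
      show "continuous_on {0..t} (\<lambda>s. Ient s - s^2/2)"
        using continuous_on_subset[OF continuous_on_Ient] that by (auto intro!: continuous_intros)
    qed
    then show ?thesis by simp
  qed
  show ?thesis
  proof (cases "z > 0")
    case False
    then have "(- z)^2 / 2 < Ient (- z)" using pos[of "- z"] assms by auto
    then show ?thesis by simp
  qed (use pos assms in auto)
qed

lemma Ient_ge_half_square:
  fixes z :: real assumes "\<bar>z\<bar> \<le> 1"
  shows "z^2 / 2 \<le> Ient z"
proof (cases "z = 0")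
  case False
  with Ient_gt_half_square[OF assms] show ?thesis by linarith
qed simp

lemma ln_ratio_bounds:
  fixes p a :: real assumes "0 \<le> p" "0 < a"
  shows "p - a \<le> p * ln (p / a)" and "p * ln (p / a) \<le> p * (p - a) / a"
proof -
  have "p - a \<le> p * ln (p / a) \<and> p * ln (p / a) \<le> p * (p - a) / a"
  proof (cases "p = 0")
    case False
    then have p: "p > 0" using assms by simp
    have "1 - a / p \<le> ln (p / a)"
      using ln_le_minus_one[of "a / p"] p assms by (simp add: ln_div)
    then have "p * (1 - a / p) \<le> p * ln (p / a)" using p by (intro mult_left_mono) auto
    moreover have "p * ln (p / a) \<le> p * (p / a - 1)"
      using ln_le_minus_one[of "p / a"] p assms by (intro mult_left_mono) auto
    moreover have "p * (1 - a / p) = p - a" using p by (simp add: field_simps)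
    moreover have "p * (p / a - 1) = p * (p - a) / a" using assms by (simp add: field_simps)
    ultimately show ?thesis by simp
  qed (use assms in simp)
  then show "p - a \<le> p * ln (p / a)" and "p * ln (p / a) \<le> p * (p - a) / a" by auto
qed

text \<open>The gap in the Legendre inequality for Ient against ln cosh is a relative entropy of
  two-point laws: p = (1 + v) / 2 is the law of a spin with mean v, and
  a = e^u / (2 cosh u) the law of a spin under the tilt u.\<close>

lemma Ient_legendre_gap_eq:
  fixes v u :: real assumes "\<bar>v\<bar> \<le> 1"
  defines "p \<equiv> (1 + v) / 2" and "a \<equiv> exp u / (2 * cosh u)"
  shows "Ient v + ln (cosh u) - v * u = p * ln (p / a) + (1 - p) * ln ((1 - p) / (1 - a))"
proof -
  have d: "2 * cosh u = exp u + exp (- u)" "exp u + exp (- u) > 0"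
    by (simp_all add: cosh_field_def add_pos_pos)
  have a: "a > 0" "1 - a = exp (- u) / (2 * cosh u)"
    unfolding a_def d(1) using d(2) by (simp_all add: field_simps)
  then have "1 - a > 0" using d by simp
  have p: "0 \<le> p" "0 \<le> 1 - p" using assms unfolding p_def by auto
  have xlnx: "q * ln (q / b) = q * ln q - q * ln b" if "0 \<le> q" "0 < b" for q b :: real
    using that by (cases "q = 0") (auto simp: ln_div algebra_simps)
  have Iv: "Ient v = ln 2 + p * ln p + (1 - p) * ln (1 - p)"
  proof -
    have q: "1 - p = (1 - v) / 2" unfolding p_def by (simp add: field_simps)
    have "1/2 * (1 + v) * ln (1 + v) = p * ln 2 + p * ln p"
    proof (cases "p = 0")
      case False
      then have "ln (1 + v) = ln 2 + ln p" using p(1) by (simp add: p_def ln_div)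
      then show ?thesis by (simp add: p_def algebra_simps)
    qed (simp add: p_def)
    moreover have "1/2 * (1 - v) * ln (1 - v) = (1 - p) * ln 2 + (1 - p) * ln (1 - p)"
    proof (cases "1 - p = 0")
      case False
      then have "ln (1 - v) = ln 2 + ln (1 - p)" using p(2) by (simp add: q ln_div)
      then show ?thesis by (simp add: q algebra_simps)
    qed (simp add: q)
    ultimately have "Ient v = p * ln 2 + p * ln p + ((1 - p) * ln 2 + (1 - p) * ln (1 - p))"
      unfolding Ient_def by linarith
    then show ?thesis by (simp add: algebra_simps)
  qed
  have "ln a = u - ln 2 - ln (cosh u)" "ln (1 - a) = - u - ln 2 - ln (cosh u)"
    using a \<open>1 - a > 0\<close> unfolding a_def by (simp_all add: ln_div ln_mult)
  then have "p * ln (p / a) = p * ln p - p * (u - ln 2 - ln (cosh u))"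
    "(1 - p) * ln ((1 - p) / (1 - a)) = (1 - p) * ln (1 - p) - (1 - p) * (- u - ln 2 - ln (cosh u))"
    using xlnx[OF p(1) a(1)] xlnx[OF p(2) \<open>1 - a > 0\<close>] by simp_all
  moreover have "p * (u - ln 2 - ln (cosh u)) + (1 - p) * (- u - ln 2 - ln (cosh u))
      = v * u - ln 2 - ln (cosh u)"
    unfolding p_def by (simp add: field_simps)
  ultimately show ?thesis using Iv by linarith
qed

lemma Ient_ge_legendre:
  fixes v u :: real assumes "\<bar>v\<bar> \<le> 1"
  shows "v * u - ln (cosh u) \<le> Ient v"
proof -
  define p where "p = (1 + v) / 2"
  define a where "a = exp u / (2 * cosh u)"
  have d: "2 * cosh u = exp u + exp (- u)" "exp u + exp (- u) > 0"
    by (simp_all add: cosh_field_def add_pos_pos)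
  have "a > 0" "1 - a > 0" unfolding a_def d(1) using d(2) by (simp_all add: field_simps)
  moreover have "0 \<le> p" "0 \<le> 1 - p" using assms unfolding p_def by auto
  ultimately show ?thesis
    using ln_ratio_bounds(1)[of p a] ln_ratio_bounds(1)[of "1 - p" "1 - a"]
      Ient_legendre_gap_eq[OF assms, of u, folded p_def a_def] by linarith
qed

text \<open>Near-equality in the Legendre inequality, at the tilt u = artanh w; w must stay inside
  (-1, 1), which is why the tilt is computed from a point shrunk towards the origin.\<close>

lemma Ient_le_legendre_artanh:
  fixes v w :: real assumes "\<bar>v\<bar> \<le> 1" "\<bar>w\<bar> < 1"
  shows "Ient v \<le> v * artanh w - ln (cosh (artanh w)) + (v - w)^2 / (1 - w^2)"
proof -
  define p where "p = (1 + v) / 2"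
  define a where "a = exp (artanh w) / (2 * cosh (artanh w))"
  have w: "1 + w > 0" "1 - w > 0" "1 - w^2 > 0"
    using assms(2) abs_square_less_1[of w] by auto
  have "exp (artanh w) + exp (- artanh w) > 0" by (simp add: add_pos_pos)
  then have "a = tanh (artanh w) / 2 + 1/2"
    unfolding a_def tanh_def cosh_field_def sinh_field_def by (simp add: field_simps)
  then have a: "a = (1 + w) / 2" using tanh_artanh[OF assms(2)] by simp
  have p: "0 \<le> p" "0 \<le> 1 - p" using assms unfolding p_def by auto
  have "p * (p - a) / a + (1 - p) * ((1 - p) - (1 - a)) / (1 - a) = (v - w)^2 / (1 - w^2)"
    unfolding a p_def using w by (simp add: field_simps power2_eq_square)
  then show ?thesis
    using ln_ratio_bounds(2)[OF p(1), of a] ln_ratio_bounds(2)[OF p(2), of "1 - a"] a w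
      Ient_legendre_gap_eq[OF assms(1), of "artanh w", folded p_def a_def] by fastforce
qed

section \<open>Block magnetizations and Gibbs weights\<close>

definition spin_sum :: "nat set \<Rightarrow> (nat \<Rightarrow> real) \<Rightarrow> real" where
  "spin_sum T \<sigma> = (\<Sum>i\<in>T. \<sigma> i)"

definition interaction :: "real \<Rightarrow> real \<Rightarrow> real \<times> real \<Rightarrow> real" where
  "interaction \<alpha> \<beta> x = 1/2 * (1/4 * \<beta> * (fst x)^2 + 1/4 * \<beta> * (snd x)^2 + 1/2 * \<alpha> * fst x * snd x)"

lemma Gamma_fn_eq_interaction:
  "Gamma_fn \<alpha> \<beta> x = interaction \<alpha> \<beta> x - 1/2 * Ient (fst x) - 1/2 * Ient (snd x)"
  unfolding Gamma_fn_def interaction_def by simp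

lemma admissibleD:
  assumes "admissible N S"
  shows "S \<subseteq> {1..N}" "card S = N div 2" "card ({1..N} - S) = N div 2"
    "real N = 2 * real (N div 2)"
proof -
  show S: "S \<subseteq> {1..N}" "card S = N div 2" using assms unfolding admissible_def by auto
  then show "card ({1..N} - S) = N div 2"
    using assms unfolding admissible_def by (subst card_Diff_subset) (auto intro: finite_subset)
  show "real N = 2 * real (N div 2)" using assms unfolding admissible_def by auto
qed

lemma finite_configs: "finite (configs N)"
  unfolding configs_def by (intro finite_PiE) auto

lemma magn_eq_spin_sum:
  "magn N S \<sigma> = (2 / real N * spin_sum S \<sigma>, 2 / real N * spin_sum ({1..N} - S) \<sigma>)"
  unfolding magn_def spin_sum_def by simp

lemma sum_same_block_split:
  assumes "finite A" "S \<subseteq> A"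
  shows "(\<Sum>i\<in>A. \<Sum>j\<in>A. if same_block S i j then g i j else h i j) =
    (\<Sum>i\<in>S. \<Sum>j\<in>S. g i j) + (\<Sum>i\<in>S. \<Sum>j\<in>A - S. h i j) + (\<Sum>i\<in>A - S. \<Sum>j\<in>S. h i j)
    + (\<Sum>i\<in>A - S. \<Sum>j\<in>A - S. g i j)"
proof -
  have split: "sum f A = sum f S + sum f (A - S)" for f :: "nat \<Rightarrow> 'b::comm_monoid_add"
    using sum.subset_diff[OF assms(2,1)] by (simp add: add.commute)
  have "(\<Sum>i\<in>A. \<Sum>j\<in>A. if same_block S i j then g i j else h i j)
      = (\<Sum>i\<in>S. (\<Sum>j\<in>S. if same_block S i j then g i j else h i j)
                      + (\<Sum>j\<in>A - S. if same_block S i j then g i j else h i j))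
      + (\<Sum>i\<in>A - S. (\<Sum>j\<in>S. if same_block S i j then g i j else h i j)
                      + (\<Sum>j\<in>A - S. if same_block S i j then g i j else h i j))"
    by (simp only: split)
  also have "\<dots> = (\<Sum>i\<in>S. (\<Sum>j\<in>S. g i j) + (\<Sum>j\<in>A - S. h i j))
      + (\<Sum>i\<in>A - S. (\<Sum>j\<in>S. h i j) + (\<Sum>j\<in>A - S. g i j))"
    by (intro arg_cong2[where f="(+)"] sum.cong refl) (auto simp: same_block_def)
  finally show ?thesis by (simp add: sum.distrib algebra_simps)
qed

lemma neg_hamiltonian_eq:
  assumes "S \<subseteq> {1..N}" "N > 0"
  shows "- hamiltonian N \<alpha> \<beta> S \<sigma> = real N * interaction \<alpha> \<beta> (magn N S \<sigma>)"
proof -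
  let ?a = "spin_sum S \<sigma>" and ?b = "spin_sum ({1..N} - S) \<sigma>"
  have same: "(\<Sum>i\<in>{1..N}. \<Sum>j\<in>{1..N}. if same_block S i j then \<sigma> i * \<sigma> j else 0) = ?a^2 + ?b^2"
    using sum_same_block_split[OF _ assms(1), of "\<lambda>i j. \<sigma> i * \<sigma> j" "\<lambda>i j. 0"]
    by (simp add: spin_sum_def power2_eq_square sum_product)
  have other: "(\<Sum>i\<in>{1..N}. \<Sum>j\<in>{1..N}. if same_block S i j then 0 else \<sigma> i * \<sigma> j) = 2 * ?a * ?b"
    using sum_same_block_split[OF _ assms(1), of "\<lambda>i j. 0" "\<lambda>i j. \<sigma> i * \<sigma> j"]
      sum_product[of \<sigma> S \<sigma> "{1..N} - S"] sum_product[of \<sigma> "{1..N} - S" \<sigma> S]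
    by (simp add: spin_sum_def mult.commute)
  show ?thesis
    unfolding hamiltonian_def same other magn_eq_spin_sum interaction_def using assms(2)
    by (simp add: field_simps power2_eq_square)
qed

lemma gibbs_weight_eq:
  assumes "S \<subseteq> {1..N}" "N > 0"
  shows "gibbs_weight N \<alpha> \<beta> S \<sigma> = exp (real N * interaction \<alpha> \<beta> (magn N S \<sigma>))"
  unfolding gibbs_weight_def neg_hamiltonian_eq[OF assms] ..

text \<open>Spins are independent under an external field that is constant on each block.\<close>

lemma sum_configs_exp_spin_sums:
  assumes "admissible N S"
  shows "(\<Sum>\<sigma>\<in>configs N. exp (u1 * spin_sum S \<sigma> + u2 * spin_sum ({1..N} - S) \<sigma>))
     = 2 ^ N * exp (real (N div 2) * (ln (cosh u1) + ln (cosh u2)))"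
proof -
  let ?A = "{1..N}"
  define c where "c i = (if i \<in> S then u1 else u2)" for i
  have S: "S \<subseteq> ?A" using admissibleD[OF assms] by simp
  have lin: "u1 * spin_sum S \<sigma> + u2 * spin_sum (?A - S) \<sigma> = (\<Sum>i\<in>?A. c i * \<sigma> i)" for \<sigma>
  proof -
    have "(\<Sum>i\<in>?A. c i * \<sigma> i) = (\<Sum>i\<in>?A - S. c i * \<sigma> i) + (\<Sum>i\<in>S. c i * \<sigma> i)"
      by (rule sum.subset_diff[OF S]) simp
    also have "\<dots> = (\<Sum>i\<in>?A - S. u2 * \<sigma> i) + (\<Sum>i\<in>S. u1 * \<sigma> i)"
      by (intro arg_cong2[where f="(+)"] sum.cong) (auto simp: c_def)
    finally show ?thesis by (simp add: spin_sum_def sum_distrib_left)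
  qed
  have "(\<Sum>\<sigma>\<in>configs N. exp (u1 * spin_sum S \<sigma> + u2 * spin_sum (?A - S) \<sigma>))
      = (\<Sum>\<sigma>\<in>PiE ?A (\<lambda>_. {-1, 1}). \<Prod>i\<in>?A. exp (c i * \<sigma> i))"
    unfolding configs_def lin by (simp add: exp_sum)
  also have "\<dots> = (\<Prod>i\<in>?A. \<Sum>y\<in>{-1,1}. exp (c i * y))"
    by (rule prod_sum_PiE[symmetric]) auto
  also have "\<dots> = (\<Prod>i\<in>?A. 2 * cosh (c i))"
    by (intro prod.cong) (simp_all add: cosh_field_def add.commute)
  also have "\<dots> = (\<Prod>i\<in>?A - S. 2 * cosh u2) * (\<Prod>i\<in>S. 2 * cosh u1)"
    unfolding prod.subset_diff[OF S finite_atLeastAtMost]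
    by (intro arg_cong2[where f="(*)"] prod.cong) (auto simp: c_def)
  also have "\<dots> = (2 * cosh u1) ^ (N div 2) * (2 * cosh u2) ^ (N div 2)"
    using admissibleD[OF assms] by simp
  also have "\<dots> = 2 ^ N * exp (real (N div 2) * (ln (cosh u1) + ln (cosh u2)))"
    using admissibleD(4)[OF assms]
    by (simp add: power_mult_distrib exp_add exp_of_nat_mult distrib_left
        flip: power_add of_nat_add mult_2)
  finally show ?thesis .
qed

text \<open>Convexity of the interaction, which requires \<alpha> \<le> \<beta>.\<close>

lemma interaction_ge_tangent:
  assumes "0 \<le> \<alpha>" "\<alpha> \<le> \<beta>"
  shows "interaction \<alpha> \<beta> z + (\<beta> * fst z / 4 + \<alpha> * snd z / 4) * (fst m - fst z)
          + (\<beta> * snd z / 4 + \<alpha> * fst z / 4) * (snd m - snd z) \<le> interaction \<alpha> \<beta> m"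
proof -
  define d1 where "d1 = fst m - fst z"
  define d2 where "d2 = snd m - snd z"
  have "interaction \<alpha> \<beta> m - (interaction \<alpha> \<beta> z + (\<beta> * fst z / 4 + \<alpha> * snd z / 4) * (fst m - fst z)
          + (\<beta> * snd z / 4 + \<alpha> * fst z / 4) * (snd m - snd z))
       = (\<beta> - \<alpha>) / 8 * (d1^2 + d2^2) + \<alpha> / 8 * (d1 + d2)^2"
    unfolding interaction_def d1_def d2_def by (simp add: power2_eq_square field_simps; algebra)
  moreover have "(\<beta> - \<alpha>) / 8 * (d1^2 + d2^2) + \<alpha> / 8 * (d1 + d2)^2 \<ge> 0"
    using assms by (intro add_nonneg_nonneg mult_nonneg_nonneg) auto
  ultimately show ?thesis by linarith
qed

lemma partition_fn_ge:
  assumes adm: "admissible N S" and "N > 0" and \<alpha>\<beta>: "0 \<le> \<alpha>" "\<alpha> \<le> \<beta>" and z: "z \<in> square"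
  shows "2 ^ N * exp (real N * Gamma_fn \<alpha> \<beta> z) \<le> partition_fn N \<alpha> \<beta> S"
proof -
  define n where "n = N div 2"
  have N: "real N = 2 * real n" using admissibleD(4)[OF adm] unfolding n_def .
  have S: "S \<subseteq> {1..N}" using admissibleD(1)[OF adm] .
  have zb: "\<bar>fst z\<bar> \<le> 1" "\<bar>snd z\<bar> \<le> 1" using z unfolding square_def by auto
  define u1 where "u1 = (\<beta> * fst z + \<alpha> * snd z) / 2"
  define u2 where "u2 = (\<beta> * snd z + \<alpha> * fst z) / 2"
  define C where "C = real N * interaction \<alpha> \<beta> z - real n * (u1 * fst z + u2 * snd z)"
  have tilt: "exp (C + (u1 * spin_sum S \<sigma> + u2 * spin_sum ({1..N} - S) \<sigma>)) \<le> gibbs_weight N \<alpha> \<beta> S \<sigma>"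
    for \<sigma>
  proof -
    let ?m = "magn N S \<sigma>"
    have "C + (u1 * spin_sum S \<sigma> + u2 * spin_sum ({1..N} - S) \<sigma>) = real N * (interaction \<alpha> \<beta> z
        + (\<beta> * fst z / 4 + \<alpha> * snd z / 4) * (fst ?m - fst z)
        + (\<beta> * snd z / 4 + \<alpha> * fst z / 4) * (snd ?m - snd z))"
      unfolding C_def u1_def u2_def magn_eq_spin_sum N using \<open>N > 0\<close> N by (simp add: field_simps)
    also have "\<dots> \<le> real N * interaction \<alpha> \<beta> ?m"
      using interaction_ge_tangent[OF \<alpha>\<beta>] by (intro mult_left_mono) auto
    finally show ?thesis
      unfolding gibbs_weight_eq[OF S \<open>N > 0\<close>] by simp
  qed
  have "real n * (fst z * u1 - ln (cosh u1)) \<le> real n * Ient (fst z)"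
    "real n * (snd z * u2 - ln (cosh u2)) \<le> real n * Ient (snd z)"
    using Ient_ge_legendre[OF zb(1), of u1] Ient_ge_legendre[OF zb(2), of u2]
    by (simp_all add: mult_left_mono)
  moreover have "C + real n * (ln (cosh u1) + ln (cosh u2)) = real N * Gamma_fn \<alpha> \<beta> z
      + (real n * Ient (fst z) - real n * (fst z * u1 - ln (cosh u1)))
      + (real n * Ient (snd z) - real n * (snd z * u2 - ln (cosh u2)))"
    unfolding C_def Gamma_fn_eq_interaction N by (simp add: algebra_simps)
  ultimately have "real N * Gamma_fn \<alpha> \<beta> z \<le> C + real n * (ln (cosh u1) + ln (cosh u2))"
    by linarith
  then have "2 ^ N * exp (real N * Gamma_fn \<alpha> \<beta> z)
      \<le> exp C * (2 ^ N * exp (real n * (ln (cosh u1) + ln (cosh u2))))"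
    by (simp add: mult.left_commute flip: exp_add)
  also have "\<dots> = (\<Sum>\<sigma>\<in>configs N. exp (C + (u1 * spin_sum S \<sigma> + u2 * spin_sum ({1..N} - S) \<sigma>)))"
    unfolding n_def sum_configs_exp_spin_sums[OF adm, symmetric]
    by (simp add: sum_distrib_left exp_add)
  also have "\<dots> \<le> partition_fn N \<alpha> \<beta> S"
    unfolding partition_fn_def by (intro sum_mono tilt)
  finally show ?thesis .
qed

lemma shrink_toward_origin:
  fixes x \<eta> :: real
  assumes "0 < \<eta>" "\<eta> \<le> 1" "\<bar>x\<bar> \<le> 1"
  shows "\<bar>(1 - \<eta>) * x\<bar> < 1" "(x - (1 - \<eta>) * x)^2 / (1 - ((1 - \<eta>) * x)^2) \<le> \<eta>"
proof -
  have x2: "x^2 \<le> 1" using assms by (simp add: abs_square_le_1)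
  show "\<bar>(1 - \<eta>) * x\<bar> < 1"
    using assms mult_left_le[of "\<bar>x\<bar>" "1 - \<eta>"] by (simp add: abs_mult)
  have "(1 - \<eta>)^2 * x^2 \<le> (1 - \<eta>)^2" using x2 by (simp add: mult_left_le)
  also have "\<dots> \<le> 1 - \<eta>" using assms by (simp add: power2_eq_square mult_left_le)
  finally have "(1 - \<eta>)^2 * x^2 \<le> 1 - \<eta>" .
  then have den: "\<eta> \<le> 1 - ((1 - \<eta>) * x)^2" by (simp add: power_mult_distrib)
  have "(x - (1 - \<eta>) * x)^2 = \<eta>^2 * x^2" by (simp add: algebra_simps power2_eq_square)
  also have "\<dots> \<le> \<eta>^2" using x2 by (simp add: mult_left_le)
  finally have "(x - (1 - \<eta>) * x)^2 / (1 - ((1 - \<eta>) * x)^2) \<le> \<eta>^2 / \<eta>"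
    using den assms by (intro frac_le) auto
  then show "(x - (1 - \<eta>) * x)^2 / (1 - ((1 - \<eta>) * x)^2) \<le> \<eta>"
    using assms by (simp add: power2_eq_square)
qed

text \<open>Exponential Chebyshev bound for a level set of the magnetization, with tilt
  artanh ((1 - \<eta>) v) in each block.\<close>

lemma sum_gibbs_weight_level_le:
  assumes adm: "admissible N S" and "N > 0" and v: "v \<in> square" and \<eta>: "0 < \<eta>" "\<eta> \<le> 1"
  shows "(\<Sum>\<sigma>\<in>{\<sigma>\<in>configs N. magn N S \<sigma> = v}. gibbs_weight N \<alpha> \<beta> S \<sigma>)
          \<le> 2 ^ N * exp (real N * (Gamma_fn \<alpha> \<beta> v + \<eta>))"
proof -
  define n where "n = N div 2"
  have N: "real N = 2 * real n" using admissibleD(4)[OF adm] unfolding n_def .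
  have S: "S \<subseteq> {1..N}" using admissibleD(1)[OF adm] .
  have "n > 0" using N \<open>N > 0\<close> by simp
  have vb: "\<bar>fst v\<bar> \<le> 1" "\<bar>snd v\<bar> \<le> 1" using v unfolding square_def by auto
  define u1 where "u1 = artanh ((1 - \<eta>) * fst v)"
  define u2 where "u2 = artanh ((1 - \<eta>) * snd v)"
  have Ient_le: "Ient (fst v) \<le> fst v * u1 - ln (cosh u1) + \<eta>"
    "Ient (snd v) \<le> snd v * u2 - ln (cosh u2) + \<eta>"
    using Ient_le_legendre_artanh[OF vb(1) shrink_toward_origin(1)[OF \<eta> vb(1)]]
      Ient_le_legendre_artanh[OF vb(2) shrink_toward_origin(1)[OF \<eta> vb(2)]]
      shrink_toward_origin(2)[OF \<eta> vb(1)] shrink_toward_origin(2)[OF \<eta> vb(2)]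
    unfolding u1_def u2_def by linarith+
  define C where "C = real N * interaction \<alpha> \<beta> v - real n * (u1 * fst v + u2 * snd v)"
  have level: "gibbs_weight N \<alpha> \<beta> S \<sigma> = exp (C + (u1 * spin_sum S \<sigma> + u2 * spin_sum ({1..N} - S) \<sigma>))"
    if "magn N S \<sigma> = v" for \<sigma>
  proof -
    have "spin_sum S \<sigma> = real n * fst v" "spin_sum ({1..N} - S) \<sigma> = real n * snd v"
      using that \<open>n > 0\<close> unfolding magn_eq_spin_sum N by (auto simp: field_simps)
    then show ?thesis unfolding gibbs_weight_eq[OF S \<open>N > 0\<close>] C_def that
      by (simp add: algebra_simps)
  qed
  have "(\<Sum>\<sigma>\<in>{\<sigma>\<in>configs N. magn N S \<sigma> = v}. gibbs_weight N \<alpha> \<beta> S \<sigma>)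
      = (\<Sum>\<sigma>\<in>{\<sigma>\<in>configs N. magn N S \<sigma> = v}.
           exp (C + (u1 * spin_sum S \<sigma> + u2 * spin_sum ({1..N} - S) \<sigma>)))"
    using level by (intro sum.cong) auto
  also have "\<dots> \<le> (\<Sum>\<sigma>\<in>configs N. exp (C + (u1 * spin_sum S \<sigma> + u2 * spin_sum ({1..N} - S) \<sigma>)))"
    by (intro sum_mono2[OF finite_configs]) auto
  also have "\<dots> = exp C * (\<Sum>\<sigma>\<in>configs N. exp (u1 * spin_sum S \<sigma> + u2 * spin_sum ({1..N} - S) \<sigma>))"
    by (simp add: sum_distrib_left exp_add)
  also have "\<dots> = 2 ^ N * exp (C + real n * (ln (cosh u1) + ln (cosh u2)))"
    unfolding sum_configs_exp_spin_sums[OF adm] n_def by (simp add: exp_add)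
  also have "\<dots> \<le> 2 ^ N * exp (real N * (Gamma_fn \<alpha> \<beta> v + \<eta>))"
  proof -
    have "real n * Ient (fst v) \<le> real n * (fst v * u1 - ln (cosh u1) + \<eta>)"
      "real n * Ient (snd v) \<le> real n * (snd v * u2 - ln (cosh u2) + \<eta>)"
      using Ient_le by (simp_all add: mult_left_mono)
    moreover have "real N * (Gamma_fn \<alpha> \<beta> v + \<eta>) = C + real n * (ln (cosh u1) + ln (cosh u2))
        + (real n * (fst v * u1 - ln (cosh u1) + \<eta>) - real n * Ient (fst v))
        + (real n * (snd v * u2 - ln (cosh u2) + \<eta>) - real n * Ient (snd v))"
      unfolding C_def Gamma_fn_eq_interaction N by (simp add: algebra_simps)
    ultimately show ?thesis by simp
  qed
  finally show ?thesis .
qed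

lemma spin_sum_eq_of_int:
  assumes "\<sigma> \<in> configs N" "T \<subseteq> {1..N}"
  shows "\<exists>k::int. spin_sum T \<sigma> = of_int k \<and> \<bar>k\<bar> \<le> int (card T)"
proof -
  define k where "k = (\<Sum>i\<in>T. if \<sigma> i = 1 then (1::int) else -1)"
  have "\<sigma> i = 1 \<or> \<sigma> i = -1" if "i \<in> T" for i
    using assms that unfolding configs_def by (auto simp: PiE_iff)
  then have "spin_sum T \<sigma> = of_int k"
    unfolding spin_sum_def k_def of_int_sum by (intro sum.cong) auto
  moreover have "\<bar>k\<bar> \<le> (\<Sum>i\<in>T. \<bar>if \<sigma> i = 1 then (1::int) else -1\<bar>)"
    unfolding k_def by (rule sum_abs)
  moreover have "(\<Sum>i\<in>T. \<bar>if \<sigma> i = 1 then (1::int) else -1\<bar>) = int (card T)"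
    by (simp add: sum.cong[of T T _ "\<lambda>_. 1"])
  ultimately show ?thesis by auto
qed

lemma magn_mem_grid:
  assumes adm: "admissible N S" and \<sigma>: "\<sigma> \<in> configs N"
  defines "n \<equiv> N div 2"
  shows "\<exists>a b. \<bar>a\<bar> \<le> int n \<and> \<bar>b\<bar> \<le> int n \<and> magn N S \<sigma> = (of_int a / real n, of_int b / real n)"
proof -
  obtain a where a: "spin_sum S \<sigma> = of_int a" "\<bar>a\<bar> \<le> int n"
    using spin_sum_eq_of_int[OF \<sigma> admissibleD(1)[OF adm]] admissibleD(2)[OF adm] n_def by auto
  obtain b where b: "spin_sum ({1..N} - S) \<sigma> = of_int b" "\<bar>b\<bar> \<le> int n"
    using spin_sum_eq_of_int[OF \<sigma>, of "{1..N} - S"] admissibleD(3)[OF adm] n_def by auto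
  have "magn N S \<sigma> = (of_int a / real n, of_int b / real n)"
    unfolding magn_eq_spin_sum a(1) b(1) admissibleD(4)[OF adm] n_def by simp
  then show ?thesis using a(2) b(2) by blast
qed

lemma magn_in_square:
  assumes "admissible N S" "\<sigma> \<in> configs N"
  shows "magn N S \<sigma> \<in> square"
proof -
  have bound: "of_int a / real n \<in> {-1..1}" if "\<bar>a\<bar> \<le> int n" for a :: int and n :: nat
  proof (cases "n = 0")
    case False
    then have "\<bar>of_int a / real n\<bar> \<le> 1" using that by (simp add: divide_le_eq_1)
    then show ?thesis by (meson abs_le_D1 abs_le_D2 atLeastAtMost_iff minus_le_iff)
  qed simp
  obtain a b where "\<bar>a\<bar> \<le> int (N div 2)" "\<bar>b\<bar> \<le> int (N div 2)"
    "magn N S \<sigma> = (of_int a / real (N div 2), of_int b / real (N div 2))"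
    using magn_mem_grid[OF assms] by blast
  then show ?thesis unfolding square_def using bound by simp
qed

lemma card_magn_image_le:
  assumes adm: "admissible N S" and "A \<subseteq> configs N"
  shows "real (card (magn N S ` A)) \<le> (real N + 1)^2"
proof -
  define n where "n = N div 2"
  define G where "G = (\<lambda>(a, b). (of_int a / real n, of_int b / real n)) `
                       ({- int n..int n} \<times> {- int n..int n})"
  have "magn N S ` A \<subseteq> G"
  proof
    fix v assume "v \<in> magn N S ` A"
    then obtain a b where "\<bar>a\<bar> \<le> int n" "\<bar>b\<bar> \<le> int n" "v = (of_int a / real n, of_int b / real n)"
      using magn_mem_grid[OF adm] assms(2) unfolding n_def by blast
    then show "v \<in> G" unfolding G_def by (intro image_eqI[of _ _ "(a, b)"]) auto
  qed
  then have "card (magn N S ` A) \<le> card G" unfolding G_def by (intro card_mono) auto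
  also have "\<dots> \<le> card ({- int n..int n} \<times> {- int n..int n})"
    unfolding G_def by (rule card_image_le) simp
  also have "\<dots> = (2 * n + 1) * (2 * n + 1)"
    by (simp add: card_cartesian_product) (simp add: nat_add_distrib nat_mult_distrib)
  also have "2 * n = N" using adm unfolding admissible_def n_def by simp
  finally have "real (card (magn N S ` A)) \<le> real ((N + 1) * (N + 1))" by (simp only: of_nat_le_iff)
  then show ?thesis by (simp add: power2_eq_square algebra_simps)
qed

lemma sum_gibbs_weight_le:
  assumes adm: "admissible N S" and "N > 0" and \<eta>: "0 < \<eta>" "\<eta> \<le> 1" and "A \<subseteq> configs N"
    and G0: "\<And>\<sigma>. \<sigma> \<in> A \<Longrightarrow> Gamma_fn \<alpha> \<beta> (magn N S \<sigma>) \<le> G0"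
  shows "(\<Sum>\<sigma>\<in>A. gibbs_weight N \<alpha> \<beta> S \<sigma>) \<le> (real N + 1)^2 * (2 ^ N * exp (real N * (G0 + \<eta>)))"
proof -
  have finA: "finite A" using finite_subset[OF assms(5) finite_configs] .
  have "(\<Sum>\<sigma>\<in>A. gibbs_weight N \<alpha> \<beta> S \<sigma>)
      = (\<Sum>v\<in>magn N S ` A. \<Sum>\<sigma>\<in>{\<sigma>\<in>A. magn N S \<sigma> = v}. gibbs_weight N \<alpha> \<beta> S \<sigma>)"
    by (rule sum.image_gen[OF finA])
  also have "\<dots> \<le> (\<Sum>v\<in>magn N S ` A. 2 ^ N * exp (real N * (G0 + \<eta>)))"
  proof (rule sum_mono)
    fix v assume "v \<in> magn N S ` A"
    then obtain \<sigma> where \<sigma>: "\<sigma> \<in> A" "v = magn N S \<sigma>" by auto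
    have "(\<Sum>\<sigma>\<in>{\<sigma>\<in>A. magn N S \<sigma> = v}. gibbs_weight N \<alpha> \<beta> S \<sigma>)
        \<le> (\<Sum>\<sigma>\<in>{\<sigma>\<in>configs N. magn N S \<sigma> = v}. gibbs_weight N \<alpha> \<beta> S \<sigma>)"
      using assms(5) by (intro sum_mono2 finite_subset[OF _ finite_configs])
        (auto simp: gibbs_weight_def)
    also have "\<dots> \<le> 2 ^ N * exp (real N * (Gamma_fn \<alpha> \<beta> v + \<eta>))"
      using \<sigma> assms(5) magn_in_square[OF adm]
      by (intro sum_gibbs_weight_level_le[OF adm \<open>N > 0\<close> _ \<eta>]) auto
    also have "\<dots> \<le> 2 ^ N * exp (real N * (G0 + \<eta>))"
      using G0[OF \<sigma>(1)] \<sigma>(2) by (simp add: mult_left_mono)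
    finally show "(\<Sum>\<sigma>\<in>{\<sigma>\<in>A. magn N S \<sigma> = v}. gibbs_weight N \<alpha> \<beta> S \<sigma>)
        \<le> 2 ^ N * exp (real N * (G0 + \<eta>))" .
  qed
  also have "\<dots> \<le> (real N + 1)^2 * (2 ^ N * exp (real N * (G0 + \<eta>)))"
    using card_magn_image_le[OF adm assms(5)] by (simp add: mult_right_mono)
  finally show ?thesis .
qed

lemma gibbs_prob_le:
  assumes adm: "admissible N S" and "N > 0" and \<alpha>\<beta>: "0 \<le> \<alpha>" "\<alpha> \<le> \<beta>" and z: "z \<in> square"
    and \<eta>: "0 < \<eta>" "\<eta> \<le> 1"
    and G0: "\<And>\<sigma>. \<sigma> \<in> configs N \<Longrightarrow> P \<sigma> \<Longrightarrow> Gamma_fn \<alpha> \<beta> (magn N S \<sigma>) \<le> G0"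
  shows "gibbs_prob N \<alpha> \<beta> S P \<le> (real N + 1)^2 * exp (real N * (G0 + \<eta> - Gamma_fn \<alpha> \<beta> z))"
proof -
  have "gibbs_prob N \<alpha> \<beta> S P
      \<le> (real N + 1)^2 * (2 ^ N * exp (real N * (G0 + \<eta>))) / (2 ^ N * exp (real N * Gamma_fn \<alpha> \<beta> z))"
    unfolding gibbs_prob_def
    using sum_gibbs_weight_le[OF adm \<open>N > 0\<close> \<eta>, of "{\<sigma>\<in>configs N. P \<sigma>}"] G0
      partition_fn_ge[OF adm \<open>N > 0\<close> \<alpha>\<beta> z]
    by (intro frac_le) (auto intro: sum_nonneg simp: gibbs_weight_def)
  also have "\<dots> = (real N + 1)^2 * exp (real N * (G0 + \<eta> - Gamma_fn \<alpha> \<beta> z))"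
    by (simp add: exp_diff right_diff_distrib)
  finally show ?thesis .
qed

section \<open>Concentration near the maximizers of Gamma\<close>

lemma compact_square: "compact square"
  unfolding square_def by (intro compact_Times compact_Icc)

lemma continuous_on_Gamma_fn: "continuous_on square (Gamma_fn \<alpha> \<beta>)"
proof -
  have "continuous_on square (\<lambda>x. Ient (fst x))" "continuous_on square (\<lambda>x. Ient (snd x))"
    by (rule continuous_on_compose2[OF continuous_on_Ient];
        auto simp: square_def intro!: continuous_intros)+
  then show ?thesis unfolding Gamma_fn_def[abs_def] by (intro continuous_intros)
qed

lemma maximizers_nonempty: "maximizers \<alpha> \<beta> \<noteq> {}"
proof -
  have "square \<noteq> {}" by (auto simp: square_def)
  from continuous_attains_sup[OF compact_square this continuous_on_Gamma_fn]
  show ?thesis unfolding maximizers_def by blast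
qed

lemma Gamma_fn_gap:
  assumes "\<epsilon> > 0"
  obtains z G0 where "z \<in> square" "G0 < Gamma_fn \<alpha> \<beta> z"
    "\<And>x. x \<in> square \<Longrightarrow> x \<notin> (\<Union>p\<in>maximizers \<alpha> \<beta>. ball p \<epsilon>) \<Longrightarrow> Gamma_fn \<alpha> \<beta> x \<le> G0"
proof -
  define K where "K = square - (\<Union>p\<in>maximizers \<alpha> \<beta>. ball p \<epsilon>)"
  obtain z where z: "z \<in> maximizers \<alpha> \<beta>" using maximizers_nonempty by blast
  then have zsq: "z \<in> square" unfolding maximizers_def by simp
  show ?thesis
  proof (cases "K = {}")
    case True
    show ?thesis by (rule that[OF zsq, of "Gamma_fn \<alpha> \<beta> z - 1"]) (use True in \<open>auto simp: K_def\<close>)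
  next
    case False
    have "compact K" unfolding K_def by (intro compact_diff compact_square open_UN) auto
    moreover have "continuous_on K (Gamma_fn \<alpha> \<beta>)"
      by (rule continuous_on_subset[OF continuous_on_Gamma_fn]) (auto simp: K_def)
    ultimately obtain v where v: "v \<in> K" "\<And>x. x \<in> K \<Longrightarrow> Gamma_fn \<alpha> \<beta> x \<le> Gamma_fn \<alpha> \<beta> v"
      using continuous_attains_sup[OF _ False] by blast
    have "v \<notin> maximizers \<alpha> \<beta>" using v(1) assms unfolding K_def by auto
    then have "Gamma_fn \<alpha> \<beta> v < Gamma_fn \<alpha> \<beta> z"
      using v(1) z unfolding K_def maximizers_def by force
    then show ?thesis by (rule that[OF zsq]) (use v(2) in \<open>auto simp: K_def\<close>)
  qed
qed

lemma gibbs_prob_far_from_maximizers: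
  assumes \<alpha>\<beta>: "0 \<le> \<alpha>" "\<alpha> \<le> \<beta>" and "\<epsilon> > 0"
  shows "\<exists>c>0. \<exists>N0. \<forall>N\<ge>N0. \<forall>S. admissible N S \<longrightarrow>
            gibbs_prob N \<alpha> \<beta> S (\<lambda>\<sigma>. magn N S \<sigma> \<notin> (\<Union>p\<in>maximizers \<alpha> \<beta>. ball p \<epsilon>))
              \<le> exp (- c * real N)"
proof -
  obtain z G0 where z: "z \<in> square" "G0 < Gamma_fn \<alpha> \<beta> z" and
    G0: "\<And>x. x \<in> square \<Longrightarrow> x \<notin> (\<Union>p\<in>maximizers \<alpha> \<beta>. ball p \<epsilon>) \<Longrightarrow> Gamma_fn \<alpha> \<beta> x \<le> G0"
    using Gamma_fn_gap[OF \<open>\<epsilon> > 0\<close>] by blast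
  define \<delta> where "\<delta> = (Gamma_fn \<alpha> \<beta> z - G0) / 3"
  define \<eta> where "\<eta> = min \<delta> 1"
  have "\<delta> > 0" using z(2) unfolding \<delta>_def by simp
  then have \<eta>: "0 < \<eta>" "\<eta> \<le> 1" "\<eta> \<le> \<delta>" unfolding \<eta>_def by auto
  then have gap: "G0 + \<eta> - Gamma_fn \<alpha> \<beta> z \<le> - 2 * \<delta>" unfolding \<delta>_def by (simp add: field_simps)
  have "eventually (\<lambda>N. (real N + 1)^2 \<le> exp (\<delta> * real N)) sequentially"
    using \<open>\<delta> > 0\<close> by real_asymp
  then obtain N0 where N0: "\<And>N. N \<ge> N0 \<Longrightarrow> (real N + 1)^2 \<le> exp (\<delta> * real N)"
    unfolding eventually_sequentially by blast
  have "gibbs_prob N \<alpha> \<beta> S (\<lambda>\<sigma>. magn N S \<sigma> \<notin> (\<Union>p\<in>maximizers \<alpha> \<beta>. ball p \<epsilon>)) \<le> exp (- \<delta> * real N)"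
    if "N \<ge> max N0 1" "admissible N S" for N S
  proof -
    have "gibbs_prob N \<alpha> \<beta> S (\<lambda>\<sigma>. magn N S \<sigma> \<notin> (\<Union>p\<in>maximizers \<alpha> \<beta>. ball p \<epsilon>))
        \<le> (real N + 1)^2 * exp (real N * (G0 + \<eta> - Gamma_fn \<alpha> \<beta> z))"
      using that G0 magn_in_square[OF that(2)]
      by (intro gibbs_prob_le[OF that(2) _ \<alpha>\<beta> z(1) \<eta>(1,2)]) auto
    also have "\<dots> \<le> exp (\<delta> * real N) * exp (real N * (- 2 * \<delta>))"
      using N0 that mult_left_mono[OF gap, of "real N"] by (intro mult_mono) auto
    also have "\<dots> = exp (- \<delta> * real N)" by (simp flip: exp_add add: algebra_simps)
    finally show ?thesis .
  qed
  then show ?thesis using \<open>\<delta> > 0\<close> by blast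
qed

section \<open>High temperature\<close>

lemma Gamma_fn_origin [simp]: "Gamma_fn \<alpha> \<beta> (0, 0) = 0"
  by (simp add: Gamma_fn_def)

lemma origin_in_square: "(0, 0) \<in> square"
  by (simp add: square_def)

lemma Gamma_fn_neg:
  assumes "0 \<le> \<alpha>" "\<alpha> + \<beta> \<le> 2" and x: "x \<in> square" "x \<noteq> (0, 0)"
  shows "Gamma_fn \<alpha> \<beta> x < 0"
proof -
  obtain a b where ab: "x = (a, b)" by (cases x)
  have b: "\<bar>a\<bar> \<le> 1" "\<bar>b\<bar> \<le> 1" using x(1) unfolding ab square_def by auto
  have "\<alpha> * (a * b) \<le> \<alpha> * ((a^2 + b^2) / 2)"
    using assms(1) sum_squares_ge_zero[of "a - b" 0]
    by (intro mult_left_mono) (auto simp: power2_eq_square algebra_simps)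
  moreover have "(\<alpha> + \<beta>) * (a^2 + b^2) \<le> 2 * (a^2 + b^2)"
    using assms(2) by (intro mult_right_mono) auto
  ultimately have "interaction \<alpha> \<beta> x \<le> a^2 / 4 + b^2 / 4"
    unfolding interaction_def ab by (simp add: field_simps power2_eq_square)
  moreover have "a \<noteq> 0 \<or> b \<noteq> 0" using x(2) ab by auto
  then have "a^2 / 2 + b^2 / 2 < Ient a + Ient b"
    using Ient_gt_half_square[OF b(1)] Ient_gt_half_square[OF b(2)]
      Ient_ge_half_square[OF b(1)] Ient_ge_half_square[OF b(2)] by fastforce
  ultimately show ?thesis unfolding Gamma_fn_eq_interaction ab by simp
qed

lemma maximizers_eq_origin:
  assumes "0 \<le> \<alpha>" "\<alpha> + \<beta> \<le> 2"
  shows "maximizers \<alpha> \<beta> = {(0, 0)}"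
  using Gamma_fn_neg[OF assms] origin_in_square
  unfolding maximizers_def by (fastforce intro: less_imp_le)

lemma critical_points_eq_origin:
  fixes \<alpha> \<beta> x1 x2 :: real
  assumes "0 \<le> \<alpha>" "0 \<le> \<beta>" "\<alpha> + \<beta> \<le> 2" and x: "\<bar>x1\<bar> < 1" "\<bar>x2\<bar> < 1"
    and crit: "1/2 * \<beta> * x1 + 1/2 * \<alpha> * x2 = artanh x1" "1/2 * \<beta> * x2 + 1/2 * \<alpha> * x1 = artanh x2"
  shows "x1 = 0 \<and> x2 = 0"
proof (rule ccontr)
  have ge: "\<bar>x\<bar> \<le> \<bar>artanh x\<bar>" if "\<bar>x\<bar> < 1" for x :: real
    using abs_artanh_gt_abs[OF that] by (cases "x = 0") auto
  assume "\<not> (x1 = 0 \<and> x2 = 0)"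
  then have "\<bar>x1\<bar> + \<bar>x2\<bar> < \<bar>artanh x1\<bar> + \<bar>artanh x2\<bar>"
    using abs_artanh_gt_abs[OF x(1)] abs_artanh_gt_abs[OF x(2)] ge[OF x(1)] ge[OF x(2)]
    by (cases "x1 = 0") auto
  also have "\<dots> \<le> (\<beta> / 2 * \<bar>x1\<bar> + \<alpha> / 2 * \<bar>x2\<bar>) + (\<beta> / 2 * \<bar>x2\<bar> + \<alpha> / 2 * \<bar>x1\<bar>)"
    unfolding crit[symmetric] using assms(1,2)
    by (intro add_mono order.trans[OF abs_triangle_ineq]) (simp_all add: abs_mult)
  also have "\<dots> = (\<alpha> + \<beta>) / 2 * (\<bar>x1\<bar> + \<bar>x2\<bar>)" by (simp add: algebra_simps)
  also have "\<dots> \<le> \<bar>x1\<bar> + \<bar>x2\<bar>"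
    using assms(3) mult_right_mono[of "(\<alpha> + \<beta>) / 2" 1 "\<bar>x1\<bar> + \<bar>x2\<bar>"] by simp
  finally show False by simp
qed

section \<open>Low temperature\<close>

lemma artanh_eq_mult_exists:
  fixes g :: real assumes "g > 1"
  shows "\<exists>m. 0 < m \<and> m < 1 \<and> artanh m = g * m"
proof -
  define f where "f t = artanh t - g * t" for t
  define z0 where "z0 = sqrt (1 - 1 / g)"
  define z1 where "z1 = 1 - exp (- 2 * g) / 2"
  have z0: "0 < z0" "z0 < 1" "z0^2 = 1 - 1 / g" unfolding z0_def using assms by auto
  have e: "0 < exp (- 2 * g)" "exp (- 2 * g) < 1" using assms by simp_all
  have z1: "0 < z1" "z1 < 1" unfolding z1_def using e by linarith+
  have "f z0 < 0"
    using artanh_lt_div[OF z0(1,2)] z0 assms unfolding f_def by (simp add: field_simps)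
  have "ln (1 / (1 - z1)) \<le> ln ((1 + z1) / (1 - z1))"
    using z1 by (subst ln_le_cancel_iff) (auto simp: divide_right_mono)
  moreover have "ln (1 / (1 - z1)) = 2 * g + ln 2"
    unfolding z1_def by (simp add: ln_div ln_inverse)
  moreover have "ln (2::real) > 0" by simp
  ultimately have "2 * g < ln ((1 + z1) / (1 - z1))" by linarith
  then have "g < artanh z1" unfolding artanh_def by simp
  then have "0 < f z1" using z1 assms unfolding f_def by (smt (verit) mult_less_cancel_left1)
  have cont: "continuous_on {a..b} f" if "0 < a" "b < 1" for a b
    using that unfolding f_def by (intro continuous_intros) auto
  have "\<exists>m. 0 < m \<and> m < 1 \<and> f m = 0"
  proof (cases "z0 \<le> z1")
    case True
    then obtain m where "z0 \<le> m" "m \<le> z1" "f m = 0"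
      using IVT'[of f z0 0 z1] cont[OF z0(1) z1(2)] \<open>f z0 < 0\<close> \<open>0 < f z1\<close> by auto
    then show ?thesis using z0(1) z1(2) by (intro exI[of _ m]) simp
  next
    case False
    then obtain m where "z1 \<le> m" "m \<le> z0" "f m = 0"
      using IVT2'[of f z0 0 z1] cont[OF z1(1) z0(2)] \<open>f z0 < 0\<close> \<open>0 < f z1\<close> by auto
    then show ?thesis using z1(1) z0(2) by (intro exI[of _ m]) simp
  qed
  then show ?thesis unfolding f_def by simp
qed

lemma artanh_eq_mult_unique:
  fixes g z m :: real
  assumes "0 < z" "z < 1" "artanh z = g * z" "0 < m" "m < 1" "artanh m = g * m"
  shows "z = m"
  using artanh_div_strict_mono[of z m] artanh_div_strict_mono[of m z] assms
  by (cases z m rule: linorder_cases) auto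

lemma tanh_fixed_point_iff:
  fixes g z :: real assumes "0 < z"
  shows "tanh (g * z) = z \<longleftrightarrow> z < 1 \<and> artanh z = g * z"
  using tanh_real_lt_1[of "g * z"] artanh_tanh_real[of "g * z"] tanh_artanh[of z] assms by auto

definition curie_weiss :: "real \<Rightarrow> real \<Rightarrow> real" where
  "curie_weiss g z = g * z^2 / 2 - Ient z"

lemma curie_weiss_minus [simp]: "curie_weiss g (- z) = curie_weiss g z"
  by (simp add: curie_weiss_def)

lemma Gamma_fn_eq_curie_weiss:
  "Gamma_fn \<alpha> \<beta> (x, y) = curie_weiss ((\<alpha> + \<beta>) / 2) x / 2 + curie_weiss ((\<alpha> + \<beta>) / 2) y / 2
     - \<alpha> / 8 * (x - y)^2"
  unfolding Gamma_fn_def curie_weiss_def by (simp add: power2_eq_square field_simps)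

lemma curie_weiss_less:
  assumes g: "g > 1" and m: "0 < m" "m < 1" "artanh m = g * m"
    and z: "\<bar>z\<bar> \<le> 1" "\<bar>z\<bar> \<noteq> m"
  shows "curie_weiss g z < curie_weiss g m"
proof -
  have deriv: "(curie_weiss g has_real_derivative g * x - artanh x) (at x)" if "\<bar>x\<bar> < 1" for x
    unfolding curie_weiss_def[abs_def] using that
    by (auto intro!: derivative_eq_intros Ient_has_real_derivative)
  have cont: "continuous_on {a..b} (curie_weiss g)" if "0 \<le> a" "b \<le> 1" for a b
    unfolding curie_weiss_def[abs_def]
    using continuous_on_subset[OF continuous_on_Ient] that by (auto intro!: continuous_intros)
  have gm: "artanh m / m = g" using m by simp
  have "curie_weiss g t < curie_weiss g m" if "0 \<le> t" "t \<le> 1" "t \<noteq> m" for t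
  proof (cases "t < m")
    case True
    show ?thesis
    proof (rule DERIV_pos_imp_increasing_open[OF True _ cont[OF that(1) order.strict_implies_order[OF m(2)]]])
      fix x assume "t < x" "x < m"
      then have x: "0 < x" "x < 1" using that m by auto
      then have "artanh x / x < g" using artanh_div_strict_mono[of x m] \<open>x < m\<close> m gm by simp
      then have "artanh x < g * x" using x by (simp add: divide_less_eq mult.commute)
      then show "\<exists>y. (curie_weiss g has_real_derivative y) (at x) \<and> y > 0"
        using deriv[of x] x by auto
    qed
  next
    case False
    then have "m < t" using that by simp
    show ?thesis
    proof (rule DERIV_neg_imp_decreasing_open[OF \<open>m < t\<close> _ cont[OF _ that(2)]])
      fix x assume "m < x" "x < t"
      then have x: "0 < x" "x < 1" using that m by auto
      then have "g < artanh x / x" using artanh_div_strict_mono[of m x] \<open>m < x\<close> m gm by simp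
      then have "g * x < artanh x" using x by (simp add: less_divide_eq mult.commute)
      then show "\<exists>y. (curie_weiss g has_real_derivative y) (at x) \<and> y < 0"
        using deriv[of x] x by auto
    qed (use m in simp)
  qed
  from this[of "\<bar>z\<bar>"] show ?thesis using z by (cases "z \<ge> 0") auto
qed

lemma maximizers_eq_pm:
  assumes "\<alpha> > 0" "(\<alpha> + \<beta>) / 2 > 1"
    and m: "0 < m" "m < 1" "artanh m = (\<alpha> + \<beta>) / 2 * m"
  shows "maximizers \<alpha> \<beta> = {(m, m), (-m, -m)}"
proof -
  define F where "F = curie_weiss ((\<alpha> + \<beta>) / 2)"
  have F_le: "F z \<le> F m" and F_eq: "F z = F m \<Longrightarrow> z = m \<or> z = - m" if "\<bar>z\<bar> \<le> 1" for z
    using curie_weiss_less[OF assms(2) m that] m unfolding F_def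
    by (cases "\<bar>z\<bar> = m"; auto simp: abs_if split: if_splits)+
  have Gamma: "Gamma_fn \<alpha> \<beta> (x, y) = F x / 2 + F y / 2 - \<alpha> / 8 * (x - y)^2" for x y
    unfolding F_def by (rule Gamma_fn_eq_curie_weiss)
  have "Gamma_fn \<alpha> \<beta> (x, y) \<le> F m" and
    "Gamma_fn \<alpha> \<beta> (x, y) = F m \<Longrightarrow> (x, y) \<in> {(m, m), (-m, -m)}"
    if "(x, y) \<in> square" for x y
  proof -
    have xy: "\<bar>x\<bar> \<le> 1" "\<bar>y\<bar> \<le> 1" using that unfolding square_def by auto
    have "\<alpha> / 8 * (x - y)^2 \<ge> 0" using assms(1) by simp
    then show "Gamma_fn \<alpha> \<beta> (x, y) \<le> F m" unfolding Gamma using F_le[OF xy(1)] F_le[OF xy(2)] by linarith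
    assume "Gamma_fn \<alpha> \<beta> (x, y) = F m"
    then have "F x = F m" "\<alpha> / 8 * (x - y)^2 = 0"
      unfolding Gamma using F_le[OF xy(1)] F_le[OF xy(2)] \<open>\<alpha> / 8 * (x - y)^2 \<ge> 0\<close> by linarith+
    then show "(x, y) \<in> {(m, m), (-m, -m)}" using F_eq[OF xy(1)] assms(1) by auto
  qed
  moreover have "Gamma_fn \<alpha> \<beta> (m, m) = F m" "Gamma_fn \<alpha> \<beta> (-m, -m) = F m"
    unfolding Gamma F_def by simp_all
  moreover have "(m, m) \<in> square" "(-m, -m) \<in> square" using m unfolding square_def by auto
  ultimately show ?thesis unfolding maximizers_def by (auto, fastforce+)
qed

section \<open>Weak convergence\<close>

lemma abs_weighted_mean_le:
  fixes w h :: "'a \<Rightarrow> real"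
  assumes "finite C" and w: "\<And>x. x \<in> C \<Longrightarrow> 0 \<le> w x" and Z: "Z = (\<Sum>x\<in>C. w x)" "Z > 0"
    and "0 \<le> r" and hB: "\<And>x. x \<in> C \<Longrightarrow> \<bar>h x\<bar> \<le> B" and hr: "\<And>x. x \<in> C \<Longrightarrow> \<not> P x \<Longrightarrow> \<bar>h x\<bar> \<le> r"
  shows "\<bar>(\<Sum>x\<in>C. w x * h x) / Z\<bar> \<le> r + B * ((\<Sum>x\<in>{x\<in>C. P x}. w x) / Z)"
proof -
  have "\<bar>\<Sum>x\<in>C. w x * h x\<bar> \<le> (\<Sum>x\<in>C. w x * \<bar>h x\<bar>)"
    by (intro order.trans[OF sum_abs] sum_mono) (simp add: abs_mult w)
  also have "\<dots> = (\<Sum>x\<in>{x\<in>C. P x}. w x * \<bar>h x\<bar>) + (\<Sum>x\<in>{x\<in>C. \<not> P x}. w x * \<bar>h x\<bar>)"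
  proof -
    have "(\<Sum>x\<in>C. w x * \<bar>h x\<bar>) = (\<Sum>x\<in>{x\<in>C. P x} \<union> {x\<in>C. \<not> P x}. w x * \<bar>h x\<bar>)"
      by (rule sum.cong) auto
    also have "\<dots> = (\<Sum>x\<in>{x\<in>C. P x}. w x * \<bar>h x\<bar>) + (\<Sum>x\<in>{x\<in>C. \<not> P x}. w x * \<bar>h x\<bar>)"
      by (rule sum.union_disjoint) (use \<open>finite C\<close> in auto)
    finally show ?thesis .
  qed
  also have "\<dots> \<le> (\<Sum>x\<in>{x\<in>C. P x}. w x * B) + (\<Sum>x\<in>{x\<in>C. \<not> P x}. w x * r)"
    using w hB hr by (intro add_mono sum_mono mult_left_mono) auto
  also have "(\<Sum>x\<in>{x\<in>C. \<not> P x}. w x * r) \<le> (\<Sum>x\<in>C. w x * r)"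
    using \<open>finite C\<close> w \<open>0 \<le> r\<close> by (intro sum_mono2) auto
  finally have "\<bar>\<Sum>x\<in>C. w x * h x\<bar> \<le> B * (\<Sum>x\<in>{x\<in>C. P x}. w x) + r * Z"
    unfolding Z(1) by (simp add: sum_distrib_left sum_distrib_right mult.commute)
  then show ?thesis using Z(2) by (simp add: field_simps)
qed

lemma partition_fn_pos: "partition_fn N \<alpha> \<beta> S > 0"
  unfolding partition_fn_def gibbs_weight_def
  using finite_configs by (intro sum_pos) (auto simp: configs_def PiE_eq_empty_iff)

lemma gibbs_expect_diff_le:
  assumes "0 \<le> r" "\<And>\<sigma>. \<bar>g \<sigma> - c\<bar> \<le> B" "\<And>\<sigma>. \<not> P \<sigma> \<Longrightarrow> \<bar>g \<sigma> - c\<bar> \<le> r"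
  shows "\<bar>gibbs_expect N \<alpha> \<beta> S g - c\<bar> \<le> r + B * gibbs_prob N \<alpha> \<beta> S P"
proof -
  let ?w = "gibbs_weight N \<alpha> \<beta> S" and ?Z = "partition_fn N \<alpha> \<beta> S"
  have "(\<Sum>\<sigma>\<in>configs N. ?w \<sigma> * (g \<sigma> - c)) = (\<Sum>\<sigma>\<in>configs N. ?w \<sigma> * g \<sigma>) - c * ?Z"
    by (simp add: partition_fn_def sum_subtractf sum_distrib_left algebra_simps)
  then have "gibbs_expect N \<alpha> \<beta> S g - c = (\<Sum>\<sigma>\<in>configs N. ?w \<sigma> * (g \<sigma> - c)) / ?Z"
    using partition_fn_pos[of N \<alpha> \<beta> S] by (simp add: gibbs_expect_def field_simps)
  also have "\<bar>\<dots>\<bar> \<le> r + B * gibbs_prob N \<alpha> \<beta> S P"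
    unfolding gibbs_prob_def
    by (intro abs_weighted_mean_le finite_configs partition_fn_pos assms)
      (auto simp: gibbs_weight_def partition_fn_def)
  finally show ?thesis .
qed

lemma law_m_weak_conv_dirac_maximizer:
  assumes \<alpha>\<beta>: "0 \<le> \<alpha>" "\<alpha> \<le> \<beta>" and M: "maximizers \<alpha> \<beta> = {p}"
    and adm: "\<And>k. admissible (2 * k) (Sseq k)"
  shows "law_m_weak_conv_dirac \<alpha> \<beta> Sseq p"
  unfolding law_m_weak_conv_dirac_def
proof (intro allI impI LIMSEQ_I)
  fix f :: "real \<times> real \<Rightarrow> real" and r :: real
  assume f: "continuous_on UNIV f \<and> bounded (range f)" and "r > 0"
  obtain B0 where B0: "\<And>x. \<bar>f x\<bar> \<le> B0" using f unfolding bounded_iff by auto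
  define B where "B = 2 * B0 + 1"
  have B: "\<bar>f x - f p\<bar> \<le> B" "B > 0" for x
    using B0[of x] B0[of p] unfolding B_def by linarith+
  obtain d where d: "d > 0" "\<And>x. dist x p < d \<Longrightarrow> \<bar>f x - f p\<bar> < r / 2"
    using f \<open>r > 0\<close> unfolding continuous_on_eq_continuous_at[OF open_UNIV] continuous_at_eps_delta
    by (metis UNIV_I dist_real_def half_gt_zero)
  obtain c N0 where "c > 0" and N0: "\<And>N S. N \<ge> N0 \<Longrightarrow> admissible N S \<Longrightarrow>
      gibbs_prob N \<alpha> \<beta> S (\<lambda>\<sigma>. magn N S \<sigma> \<notin> ball p d) \<le> exp (- c * real N)"
    using gibbs_prob_far_from_maximizers[OF \<alpha>\<beta> d(1)] unfolding M by auto
  have "(\<lambda>k. B * exp (- c * real (2 * k))) \<longlonglongrightarrow> 0" using \<open>c > 0\<close> by real_asymp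
  moreover have "r / 2 > 0" using \<open>r > 0\<close> by simp
  ultimately obtain k1 where k1: "\<forall>k\<ge>k1. norm (B * exp (- c * real (2 * k)) - 0) < r / 2"
    using LIMSEQ_D by blast
  have "norm (gibbs_expect (2 * k) \<alpha> \<beta> (Sseq k) (\<lambda>\<sigma>. f (magn (2 * k) (Sseq k) \<sigma>)) - f p) < r"
    if "k \<ge> max N0 k1" for k
  proof -
    have "\<bar>gibbs_expect (2 * k) \<alpha> \<beta> (Sseq k) (\<lambda>\<sigma>. f (magn (2 * k) (Sseq k) \<sigma>)) - f p\<bar>
        \<le> r / 2 + B * gibbs_prob (2 * k) \<alpha> \<beta> (Sseq k) (\<lambda>\<sigma>. magn (2 * k) (Sseq k) \<sigma> \<notin> ball p d)"
      using B d(2) \<open>r > 0\<close> by (intro gibbs_expect_diff_le) (auto simp: dist_commute less_imp_le)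
    also have "\<dots> \<le> r / 2 + B * exp (- c * real (2 * k))"
      using N0[OF _ adm, of k] that B(2) by (intro add_left_mono mult_left_mono) auto
    also have "\<dots> < r" using k1 that abs_ge_self[of "B * exp (- c * real (2 * k))"] by force
    finally show ?thesis by simp
  qed
  then show "\<exists>k0. \<forall>k\<ge>k0. norm (gibbs_expect (2 * k) \<alpha> \<beta> (Sseq k) (\<lambda>\<sigma>. f (magn (2 * k) (Sseq k) \<sigma>)) - f p) < r"
    by blast
qed

theorem mainTheorem2:
  fixes \<alpha> \<beta> :: real
  assumes "\<beta> > 0" and "0 \<le> \<alpha>" and "\<alpha> \<le> \<beta>"
  shows "(\<forall>\<epsilon>>0. \<exists>c>0. \<exists>N0. \<forall>N\<ge>N0. \<forall>S. admissible N S \<longrightarrow>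
            gibbs_prob N \<alpha> \<beta> S (\<lambda>\<sigma>. magn N S \<sigma> \<notin> (\<Union>p\<in>maximizers \<alpha> \<beta>. ball p \<epsilon>))
              \<le> exp (- c * real N))
       \<and> (\<alpha> + \<beta> \<le> 2 \<longrightarrow>
            (\<alpha> > 0 \<longrightarrow> (\<forall>x1 x2. x1 \<in> {-1<..<1} \<and> x2 \<in> {-1<..<1} \<longrightarrow>
                 ((1/2 * \<beta> * x1 + 1/2 * \<alpha> * x2 = artanh x1 \<and>
                   1/2 * \<beta> * x2 + 1/2 * \<alpha> * x1 = artanh x2) \<longleftrightarrow> (x1 = 0 \<and> x2 = 0))))
            \<and> maximizers \<alpha> \<beta> = {(0, 0)}
            \<and> (\<forall>Sseq. (\<forall>k. admissible (2 * k) (Sseq k)) \<longrightarrow>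
                 law_m_weak_conv_dirac \<alpha> \<beta> Sseq (0, 0)))
       \<and> (\<alpha> + \<beta> > 2 \<and> \<alpha> > 0 \<longrightarrow>
            (\<exists>m. m > 0 \<and> tanh ((\<alpha> + \<beta>) / 2 * m) = m
                 \<and> (\<forall>z>0. tanh ((\<alpha> + \<beta>) / 2 * z) = z \<longrightarrow> z = m)
                 \<and> maximizers \<alpha> \<beta> = {(m, m), (-m, -m)}))"
proof -
  have critical: "(1/2 * \<beta> * x1 + 1/2 * \<alpha> * x2 = artanh x1 \<and> 1/2 * \<beta> * x2 + 1/2 * \<alpha> * x1 = artanh x2)
      \<longleftrightarrow> (x1 = 0 \<and> x2 = 0)" if "\<alpha> + \<beta> \<le> 2" "x1 \<in> {-1<..<1}" "x2 \<in> {-1<..<1}" for x1 x2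
    using critical_points_eq_origin[OF assms(2) _ that(1), of x1 x2] that assms by auto
  have ordered: "\<exists>m. m > 0 \<and> tanh ((\<alpha> + \<beta>) / 2 * m) = m
      \<and> (\<forall>z>0. tanh ((\<alpha> + \<beta>) / 2 * z) = z \<longrightarrow> z = m) \<and> maximizers \<alpha> \<beta> = {(m, m), (-m, -m)}"
    if coupling: "\<alpha> + \<beta> > 2" "\<alpha> > 0"
  proof -
    obtain m where m: "0 < m" "m < 1" "artanh m = (\<alpha> + \<beta>) / 2 * m"
      using artanh_eq_mult_exists[of "(\<alpha> + \<beta>) / 2"] coupling(1) by auto
    have "tanh ((\<alpha> + \<beta>) / 2 * m) = m" using tanh_fixed_point_iff[OF m(1), of "(\<alpha> + \<beta>) / 2"] m(2,3) by blast
    moreover have "z = m" if "z > 0" "tanh ((\<alpha> + \<beta>) / 2 * z) = z" for z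
    proof -
      have "z < 1" "artanh z = (\<alpha> + \<beta>) / 2 * z" using tanh_fixed_point_iff[OF that(1), of "(\<alpha> + \<beta>) / 2"] that(2) by blast+
      then show ?thesis by (rule artanh_eq_mult_unique[OF that(1) _ _ m])
    qed
    moreover have "maximizers \<alpha> \<beta> = {(m, m), (-m, -m)}"
      using maximizers_eq_pm[OF coupling(2) _ m] coupling(1) by simp
    ultimately show ?thesis using m(1) by blast
  qed
  show ?thesis
    using gibbs_prob_far_from_maximizers[OF assms(2,3)] maximizers_eq_origin[OF assms(2)]
      law_m_weak_conv_dirac_maximizer[OF assms(2,3)] critical ordered
    by (intro conjI impI allI) auto
qed

end
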